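(* Let $N\ge 4$ be an even integer and $\Lambda=\{1,\dots,N\}$ a ring of sites with periodic boundary conditions (indices taken mod $N$). To each site $i\in\Lambda$ attach two spin-$1/2$ degrees of freedom labelled $(i,\mathrm{L})$ and $(i,\mathrm{R})$, so the total Hilbert space is $(\mathbb{C}^{2})^{\otimes 2N}$. For each $i\in\Lambda$ let the bond $i^*$ denote the pair of spins $((i,\mathrm{R}),(i+1,\mathrm{L}))$, and define the two bond states $$|\boldsymbol{\downarrow}\rangle_{i^*}=\tfrac{1}{\sqrt2}\big(|\uparrow\downarrow\rangle-|\downarrow\uparrow\rangle\big)_{(i,\mathrm{R}),(i+1,\mathrm{L})},\qquad |\boldsymbol{\uparrow}\rangle_{i^*}=|\uparrow\uparrow\rangle_{(i,\mathrm{R}),(i+1,\mathrm{L})}.$$ Let $$Q^+_{\mathrm{frac}}=\sum_{j\in\Lambda}(-1)^j\,|\boldsymbol{\uparrow}\boldsymbol{\uparrow}\rangle\langle\boldsymbol{\downarrow}\boldsymbol{\downarrow}|_{j^*,(j+1)^*},\qquad |\mathcal{S}^{\mathrm{frac}}_n\rangle=(Q^+_{\mathrm{frac}})^n\bigotimes_{j\in\Lambda}|\boldsymbol{\downarrow}\rangle_{j^*}\quad(n\ge 0).$$ Then for every $n\ge0$ and every $i\in\Lambda$ there exist (unnormalized, possibly zero) vectors $|\Xi^0_{\sigma\sigma'}\rangle$ ($\sigma,\sigma'\in\{\uparrow,\downarrow\}$), $|\Xi^1\rangle$, $|\Xi^2\rangle$ in the Hilbert space of all spins belonging to bonds other than $(i-1)^*,i^*,(i+1)^*$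 such that $$|\mathcal{S}^{\mathrm{frac}}_n\rangle=\sum_{\sigma,\sigma'\in\{\uparrow,\downarrow\}}|\boldsymbol{\sigma}\boldsymbol{\downarrow}\boldsymbol{\sigma'}\rangle_{(i-1)^*,i^*,(i+1)^*}\otimes|\Xi^0_{\sigma\sigma'}\rangle+\big(|\boldsymbol{\uparrow}\boldsymbol{\uparrow}\boldsymbol{\downarrow}\rangle-|\boldsymbol{\downarrow}\boldsymbol{\uparrow}\boldsymbol{\uparrow}\rangle\big)_{(i-1)^*,i^*,(i+1)^*}\otimes|\Xi^1\rangle+|\boldsymbol{\uparrow}\boldsymbol{\uparrow}\boldsymbol{\uparrow}\rangle_{(i-1)^*,i^*,(i+1)^*}\otimes|\Xi^2\rangle,$$ where $|\boldsymbol{a}\boldsymbol{b}\boldsymbol{c}\rangle_{(i-1)^*,i^*,(i+1)^*}=|\boldsymbol{a}\rangle_{(i-1)^*}\otimes|\boldsymbol{b}\rangle_{i^*}\otimes|\boldsymbol{c}\rangle_{(i+1)^*}$.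
   Context: This is the "fractionalized" spin-1/2 description of the spin-1 AKLT chain: each spin-1 site is split into two spin-1/2's, and the scar tower is built from the valence-bond-solid state $\bigotimes_j|\boldsymbol{\downarrow}\rangle_{j^*}$ by the operator $Q^+_{\mathrm{frac}}$, which turns two adjacent singlet bonds into two fully polarized bonds with a staggered sign. Bold letters denote bond states as defined in the claim. *)

theory Defs
  imports Complex_Main
begin

(* Spins are labelled (i, side) with i \<in> {1..N} a site and side = False for L,
   side = True for R.  A basis configuration assigns True (= up) or False (= down)
   to each spin; spins outside the lattice are fixed to False. *)

type_synonym cfg = "nat \<times> bool \<Rightarrow> bool"
type_synonym state = "cfg \<Rightarrow> complex"

definition spins :: "nat \<Rightarrow> (nat \<times> bool) set" where
  "spins N = {1..N} \<times> UNIV"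

definition Cfg :: "nat \<Rightarrow> cfg set" where
  "Cfg N = {c. \<forall>s. s \<notin> spins N \<longrightarrow> c s = False}"

definition nxt :: "nat \<Rightarrow> nat \<Rightarrow> nat" where
  "nxt N j = (if j = N then 1 else j + 1)"

definition prv :: "nat \<Rightarrow> nat \<Rightarrow> nat" where
  "prv N j = (if j = 1 then N else j - 1)"

(* bond state amplitudes on the bond j* = ((j,R),(j+1,L)):
   bd False = singlet (bold down), bd True = |up up> (bold up) *)
definition bd :: "bool \<Rightarrow> bool \<Rightarrow> bool \<Rightarrow> complex" where
  "bd b x y = (if b then (if x \<and> y then 1 else 0)
               else (if x \<and> \<not> y then 1 / complex_of_real (sqrt 2)
                     else if \<not> x \<and> y then - 1 / complex_of_real (sqrt 2) else 0))"

definition bondamp :: "nat \<Rightarrow> bool \<Rightarrow> nat \<Rightarrow> cfg \<Rightarrow> complex" where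
  "bondamp N b j c = bd b (c (j, True)) (c (nxt N j, False))"

(* |up up><down down| on bonds j*, (j+1)* *)
definition Qterm :: "nat \<Rightarrow> nat \<Rightarrow> state \<Rightarrow> state" where
  "Qterm N j \<psi> c =
     bondamp N True j c * bondamp N True (nxt N j) c *
     (\<Sum>x\<in>UNIV. \<Sum>y\<in>UNIV. \<Sum>z\<in>UNIV. \<Sum>w\<in>UNIV.
        cnj (bd False x y * bd False z w) *
        \<psi> (c((j, True) := x, (nxt N j, False) := y,
              (nxt N j, True) := z, (nxt N (nxt N j), False) := w)))"

definition Qfrac :: "nat \<Rightarrow> state \<Rightarrow> state" where
  "Qfrac N \<psi> = (\<lambda>c. \<Sum>j\<in>{1..N}. (-1) ^ j * Qterm N j \<psi> c)"

definition vbs :: "nat \<Rightarrow> state" where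
  "vbs N = (\<lambda>c. \<Prod>j\<in>{1..N}. bondamp N False j c)"

definition scar :: "nat \<Rightarrow> nat \<Rightarrow> state" where
  "scar N n = (Qfrac N ^^ n) (vbs N)"

definition tb :: "nat \<Rightarrow> nat \<Rightarrow> bool \<Rightarrow> bool \<Rightarrow> bool \<Rightarrow> cfg \<Rightarrow> complex" where
  "tb N i a b d c = bondamp N a (prv N i) c * bondamp N b i c * bondamp N d (nxt N i) c"

definition six :: "nat \<Rightarrow> nat \<Rightarrow> (nat \<times> bool) set" where
  "six N i = {(prv N i, True), (i, False), (i, True), (nxt N i, False),
              (nxt N i, True), (nxt N (nxt N i), False)}"

(* a vector of the Hilbert space of the remaining spins = amplitude function
   depending only on spins outside the six *)
definition outside :: "nat \<Rightarrow> nat \<Rightarrow> state \<Rightarrow> bool" where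
  "outside N i \<Xi> \<longleftrightarrow> (\<forall>c c'. (\<forall>s. s \<notin> six N i \<longrightarrow> c s = c' s) \<longrightarrow> \<Xi> c = \<Xi> c')"

end

theory Submission
  imports Defs
begin

(* Expand every state in the basis of bond product states, indexed by the set S of bonds carrying
   the polarized state |up up>.  Each term of Q+ annihilates a basis state unless both of its bonds
   are singlets, in which case it turns them into |up up>; so Q+ acts on the coefficients by
   "add an adjacent pair of up-bonds, with sign (-1)^j".  Starting from the empty set, two facts
   about the coefficient f of the scar state persist: f S = 0 when bond i is up but both of its
   neighbours are down, and f S changes sign when the up-partner of bond i is moved from bond i-1
   to bond i+1.  The second fact is where the staggered sign and the evenness of N enter: the
   pairs (i-1,i) and (i,i+1) carry opposite signs (-1)^(i-1) and (-1)^i also across the boundary.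
   Sorting the expansion by the states of the bonds i-1, i, i+1 then gives the claimed shape. *)

lemma nxt_in_sites: "j \<in> {1..N} \<Longrightarrow> nxt N j \<in> {1..N}"
  by (auto simp: nxt_def)

lemma prv_in_sites: "j \<in> {1..N} \<Longrightarrow> prv N j \<in> {1..N}"
  by (auto simp: prv_def)

lemma nxt_prv: "j \<in> {1..N} \<Longrightarrow> nxt N (prv N j) = j"
  by (auto simp: nxt_def prv_def)

lemma nxt_eq_iff_eq_prv: "j \<in> {1..N} \<Longrightarrow> k \<in> {1..N} \<Longrightarrow> nxt N j = k \<longleftrightarrow> j = prv N k"
  by (auto simp: nxt_def prv_def)

lemma nxt_eq_nxt_iff: "j \<in> {1..N} \<Longrightarrow> k \<in> {1..N} \<Longrightarrow> nxt N j = nxt N k \<longleftrightarrow> j = k"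
  by (auto simp: nxt_def)

lemma nxt_neq_self: "N \<ge> 2 \<Longrightarrow> j \<in> {1..N} \<Longrightarrow> nxt N j \<noteq> j"
  by (auto simp: nxt_def)

lemma nxt_nxt_neq_self: "N \<ge> 3 \<Longrightarrow> j \<in> {1..N} \<Longrightarrow> nxt N (nxt N j) \<noteq> j"
  by (auto simp: nxt_def)

lemma prv_neq_self: "N \<ge> 2 \<Longrightarrow> j \<in> {1..N} \<Longrightarrow> prv N j \<noteq> j"
  by (auto simp: prv_def)

lemma prv_neq_nxt: "N \<ge> 3 \<Longrightarrow> j \<in> {1..N} \<Longrightarrow> prv N j \<noteq> nxt N j"
  by (auto simp: nxt_def prv_def)

lemma neg_one_power_prv:
  "even N \<Longrightarrow> j \<in> {1..N} \<Longrightarrow> (-1::'a::ring_1) ^ prv N j = - ((-1) ^ j)"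
  by (cases j) (auto simp: prv_def)

lemma singlet_overlap_bd:
  "(\<Sum>x\<in>UNIV. \<Sum>y\<in>UNIV. cnj (bd False x y) * bd b x y) = (if b then 0 else 1)"
proof (cases b)
  case False
  then show ?thesis
    by (simp add: bd_def UNIV_bool)
      (simp add: divide_inverse flip: of_real_inverse of_real_mult of_real_add)
qed (simp add: bd_def UNIV_bool)

definition bond_state :: "nat \<Rightarrow> nat set \<Rightarrow> state" where
  "bond_state N S c = (\<Prod>k\<in>{1..N}. bondamp N (k \<in> S) k c)"

definition bond_state_except :: "nat \<Rightarrow> nat set \<Rightarrow> nat set \<Rightarrow> state" where
  "bond_state_except N B S c = (\<Prod>k\<in>{1..N} - B. bondamp N (k \<in> S) k c)"

definition bond_expansion :: "nat \<Rightarrow> (nat set \<Rightarrow> complex) \<Rightarrow> state" where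
  "bond_expansion N f c = (\<Sum>S\<in>Pow {1..N}. f S * bond_state N S c)"

lemma bond_state_split:
  "B \<subseteq> {1..N} \<Longrightarrow>
    bond_state N S c = (\<Prod>k\<in>B. bondamp N (k \<in> S) k c) * bond_state_except N B S c"
  unfolding bond_state_def bond_state_except_def by (simp add: prod.subset_diff mult.commute)

lemma bond_state_except_cong:
  assumes "S - B = S' - B"
  shows "bond_state_except N B S = bond_state_except N B S'"
  unfolding bond_state_except_def
proof (intro ext prod.cong refl)
  fix c k assume "k \<in> {1..N} - B"
  then have "k \<in> S \<longleftrightarrow> k \<in> S'" using assms by blast
  then show "bondamp N (k \<in> S) k c = bondamp N (k \<in> S') k c" by simp
qed

lemma Qterm_linear:
  "Qterm N j (\<lambda>c. \<Sum>S\<in>A. a S * g S c) c = (\<Sum>S\<in>A. a S * Qterm N j (g S) c)"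
proof (induction A rule: infinite_finite_induct)
  case (insert x F)
  have "Qterm N j (\<lambda>c. a x * g x c + (\<Sum>S\<in>F. a S * g S c)) c =
      a x * Qterm N j (g x) c + Qterm N j (\<lambda>c. \<Sum>S\<in>F. a S * g S c) c"
    by (simp add: Qterm_def UNIV_bool algebra_simps)
  then show ?case using insert by simp
qed (simp_all add: Qterm_def)

lemma Qterm_bond_state:
  assumes N: "N \<ge> 3" and j: "j \<in> {1..N}"
  shows "Qterm N j (bond_state N S) c =
    (if j \<notin> S \<and> nxt N j \<notin> S then bond_state N (S \<union> {j, nxt N j}) c else 0)"
proof -
  define n where "n = nxt N j"
  define B where "B = {j, n}"
  have n: "n \<in> {1..N}" "n \<noteq> j" "nxt N n \<noteq> n" "nxt N n \<noteq> j"
    using nxt_in_sites nxt_neq_self nxt_nxt_neq_self N j unfolding n_def by auto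
  let ?upd = "\<lambda>x y z w. c((j, True) := x, (n, False) := y, (n, True) := z, (nxt N n, False) := w)"
  have split: "bond_state N S c' = bondamp N (j \<in> S) j c' * bondamp N (n \<in> S) n c' *
      bond_state_except N B S c'" for S c'
    using bond_state_split[of B N] j n by (simp add: B_def)
  have outside_upd: "bond_state_except N B S (?upd x y z w) = bond_state_except N B S c"
    for x y z w
    unfolding bond_state_except_def
  proof (rule prod.cong[OF refl])
    fix k assume k: "k \<in> {1..N} - B"
    then have "nxt N k \<noteq> n" "nxt N k \<noteq> nxt N n"
      using j n unfolding n_def B_def by (simp_all add: nxt_eq_nxt_iff)
    then show "bondamp N (k \<in> S) k (?upd x y z w) = bondamp N (k \<in> S) k c"
      using k by (auto simp: bondamp_def B_def)
  qed
  have upd_j: "bondamp N a j (?upd x y z w) = bd a x y"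
    and upd_n: "bondamp N a n (?upd x y z w) = bd a z w" for a x y z w
    using n by (simp_all add: bondamp_def n_def)
  have factor: "(\<Sum>x\<in>UNIV. \<Sum>y\<in>UNIV. \<Sum>z\<in>UNIV. \<Sum>w\<in>UNIV.
        cnj (bd False x y * bd False z w) * (bd a x y * bd b z w * R)) =
      (\<Sum>x\<in>UNIV. \<Sum>y\<in>UNIV. cnj (bd False x y) * bd a x y) *
      (\<Sum>z\<in>UNIV. \<Sum>w\<in>UNIV. cnj (bd False z w) * bd b z w) * R" for a b R
    by (simp add: UNIV_bool algebra_simps)
  have "Qterm N j (bond_state N S) c = bondamp N True j c * bondamp N True n c *
      (\<Sum>x\<in>UNIV. \<Sum>y\<in>UNIV. \<Sum>z\<in>UNIV. \<Sum>w\<in>UNIV. cnj (bd False x y * bd False z w) *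
        (bd (j \<in> S) x y * bd (n \<in> S) z w * bond_state_except N B S c))"
    unfolding Qterm_def n_def[symmetric] by (simp only: split upd_j upd_n outside_upd)
  also have "\<dots> = bondamp N True j c * bondamp N True n c *
      ((if j \<in> S then 0 else 1) * (if n \<in> S then 0 else 1) * bond_state_except N B S c)"
    by (simp only: factor singlet_overlap_bd)
  also have "\<dots> = (if j \<notin> S \<and> n \<notin> S then bond_state N (S \<union> B) c else 0)"
    using bond_state_except_cong[of "S \<union> B" B S N] by (simp add: split B_def)
  finally show ?thesis by (simp add: n_def B_def)
qed

definition pair_coeff :: "nat \<Rightarrow> (nat set \<Rightarrow> complex) \<Rightarrow> nat set \<Rightarrow> nat \<Rightarrow> complex" where
  "pair_coeff N f T j = (if j \<in> T \<and> nxt N j \<in> T then f (T - {j, nxt N j}) else 0)"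

definition Qcoeff :: "nat \<Rightarrow> (nat set \<Rightarrow> complex) \<Rightarrow> nat set \<Rightarrow> complex" where
  "Qcoeff N f T = (\<Sum>j\<in>{1..N}. (-1) ^ j * pair_coeff N f T j)"

lemma Qterm_bond_expansion:
  assumes N: "N \<ge> 3" and j: "j \<in> {1..N}"
  shows "Qterm N j (bond_expansion N f) c = bond_expansion N (\<lambda>T. pair_coeff N f T j) c"
proof -
  define D where "D = {j, nxt N j}"
  have D: "D \<subseteq> {1..N}" using j nxt_in_sites unfolding D_def by auto
  have "Qterm N j (bond_expansion N f) c =
      (\<Sum>S\<in>Pow {1..N}. if S \<inter> D = {} then f S * bond_state N (S \<union> D) c else 0)"
    unfolding bond_expansion_def Qterm_linear
    by (rule sum.cong) (auto simp: Qterm_bond_state[OF N j] D_def)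
  also have "\<dots> = (\<Sum>S\<in>{S\<in>Pow {1..N}. S \<inter> D = {}}. f S * bond_state N (S \<union> D) c)"
    by (rule sum.inter_filter[symmetric]) simp
  also have "\<dots> = (\<Sum>T\<in>{T\<in>Pow {1..N}. D \<subseteq> T}. f (T - D) * bond_state N T c)"
    by (rule sum.reindex_bij_witness[where i="\<lambda>T. T - D" and j="\<lambda>S. S \<union> D"])
      (use D in \<open>auto simp: Un_Diff Diff_triv\<close>)
  also have "\<dots> = (\<Sum>T\<in>Pow {1..N}. if D \<subseteq> T then f (T - D) * bond_state N T c else 0)"
    by (rule sum.inter_filter) simp
  also have "\<dots> = bond_expansion N (\<lambda>T. pair_coeff N f T j) c"
    unfolding bond_expansion_def pair_coeff_def D_def by (rule sum.cong) auto
  finally show ?thesis .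
qed

lemma Qfrac_bond_expansion:
  assumes "N \<ge> 3"
  shows "Qfrac N (bond_expansion N f) = bond_expansion N (Qcoeff N f)"
proof
  fix c
  have "Qfrac N (bond_expansion N f) c =
      (\<Sum>j\<in>{1..N}. (-1) ^ j * bond_expansion N (\<lambda>T. pair_coeff N f T j) c)"
    unfolding Qfrac_def using Qterm_bond_expansion[OF assms] by simp
  also have "\<dots> = bond_expansion N (Qcoeff N f) c"
    unfolding bond_expansion_def Qcoeff_def
    by (simp add: sum_distrib_left sum_distrib_right mult.assoc) (rule sum.swap)
  finally show "Qfrac N (bond_expansion N f) c = bond_expansion N (Qcoeff N f) c" .
qed

definition scar_invariant :: "nat \<Rightarrow> nat \<Rightarrow> (nat set \<Rightarrow> complex) \<Rightarrow> bool" where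
  "scar_invariant N i f \<longleftrightarrow>
    (\<forall>S. S \<subseteq> {1..N} \<longrightarrow> prv N i \<notin> S \<longrightarrow> i \<in> S \<longrightarrow> nxt N i \<notin> S \<longrightarrow> f S = 0) \<and>
    (\<forall>S. S \<subseteq> {1..N} \<longrightarrow> prv N i \<in> S \<longrightarrow> i \<in> S \<longrightarrow> nxt N i \<notin> S \<longrightarrow>
        f (insert (nxt N i) (S - {prv N i})) = - f S)"

lemma scar_invariant_isolated:
  "scar_invariant N i f \<Longrightarrow> S \<subseteq> {1..N} \<Longrightarrow> prv N i \<notin> S \<Longrightarrow> i \<in> S \<Longrightarrow> nxt N i \<notin> S \<Longrightarrow>
    f S = 0"
  unfolding scar_invariant_def by blast

lemma scar_invariant_shift:
  "scar_invariant N i f \<Longrightarrow> S \<subseteq> {1..N} \<Longrightarrow> prv N i \<in> S \<Longrightarrow> i \<in> S \<Longrightarrow> nxt N i \<notin> S \<Longrightarrow>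
    f (insert (nxt N i) (S - {prv N i})) = - f S"
  unfolding scar_invariant_def by blast

lemma scar_invariant_empty: "scar_invariant N i (\<lambda>S. if S = {} then 1 else 0)"
  unfolding scar_invariant_def by auto

lemma pair_coeff_isolated:
  assumes f: "scar_invariant N i f" and S: "S \<subseteq> {1..N}" "i \<in> S" "i \<noteq> j" "i \<noteq> nxt N j"
    and "prv N i \<notin> S - {j, nxt N j}" "nxt N i \<notin> S - {j, nxt N j}"
  shows "pair_coeff N f S j = 0"
proof -
  have "f (S - {j, nxt N j}) = 0" using assms by (intro scar_invariant_isolated[OF f]) auto
  then show ?thesis unfolding pair_coeff_def by simp
qed

lemma Qcoeff_isolated:
  assumes i: "i \<in> {1..N}" and f: "scar_invariant N i f"
    and T: "T \<subseteq> {1..N}" "prv N i \<notin> T" "i \<in> T" "nxt N i \<notin> T"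
  shows "Qcoeff N f T = 0"
  unfolding Qcoeff_def
proof (rule sum.neutral, rule ballI)
  fix j assume j: "j \<in> {1..N}"
  show "(-1) ^ j * pair_coeff N f T j = 0"
  proof (cases "j \<in> T \<and> nxt N j \<in> T")
    case True
    then have "i \<noteq> j" "i \<noteq> nxt N j" using T nxt_eq_iff_eq_prv[OF j i] by auto
    then show ?thesis using T by (simp add: pair_coeff_isolated[OF f])
  qed (auto simp: pair_coeff_def)
qed

lemma pair_coeff_shift_disjoint:
  assumes f: "scar_invariant N i f"
    and T: "T \<subseteq> {1..N}" "prv N i \<in> T" "i \<in> T" "nxt N i \<notin> T"
    and j: "{j, nxt N j} \<inter> {prv N i, i, nxt N i} = {}"
  shows "pair_coeff N f (insert (nxt N i) (T - {prv N i})) j = - pair_coeff N f T j"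
proof (cases "j \<in> T \<and> nxt N j \<in> T")
  case True
  define U where "U = T - {j, nxt N j}"
  have "insert (nxt N i) (T - {prv N i}) - {j, nxt N j} = insert (nxt N i) (U - {prv N i})"
    using j unfolding U_def by auto
  moreover have "f (insert (nxt N i) (U - {prv N i})) = - f U"
    using T j unfolding U_def by (intro scar_invariant_shift[OF f]) auto
  ultimately show ?thesis using True j unfolding pair_coeff_def U_def by auto
next
  case False
  then show ?thesis using j unfolding pair_coeff_def by auto
qed

lemma pair_coeff_shift:
  assumes N: "N \<ge> 3" and i: "i \<in> {1..N}" and f: "scar_invariant N i f"
    and T: "T \<subseteq> {1..N}" "prv N i \<in> T" "i \<in> T" "nxt N i \<notin> T" and j: "j \<in> {1..N}"
  shows "pair_coeff N f T j + pair_coeff N f (insert (nxt N i) (T - {prv N i})) j =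
    (if j = prv N i \<or> j = i then f (T - {prv N i, i}) else 0)"
proof -
  define p where "p = prv N i"
  define q where "q = nxt N i"
  define T' where "T' = insert q (T - {p})"
  have pq: "p \<in> {1..N}" "q \<in> {1..N}" "p \<noteq> i" "q \<noteq> i" "p \<noteq> q"
    using N i prv_in_sites nxt_in_sites prv_neq_self nxt_neq_self prv_neq_nxt
    unfolding p_def q_def by auto
  have nxt_p: "nxt N p = i" using i nxt_prv unfolding p_def by blast
  have nxt_j: "nxt N j = i \<longleftrightarrow> j = p" "nxt N j = q \<longleftrightarrow> j = i"
    using nxt_eq_iff_eq_prv[OF j i] nxt_eq_nxt_iff[OF j i] unfolding p_def q_def by auto
  note isolated = pair_coeff_isolated[OF f, folded p_def q_def]
  note T = T[folded p_def q_def]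
  have T': "T' \<subseteq> {1..N}" "p \<notin> T'" "i \<in> T'" "q \<in> T'"
    using T pq unfolding T'_def by auto
  (* Only the pairs (i-1,i) and (i,i+1) contribute: a pair meeting exactly one neighbour of i
     leaves bond i isolated, and a pair away from i-1, i, i+1 commutes with the shift. *)
  consider "j = p" | "j = i" | "j = q" | "j \<notin> {p, i, q}" "nxt N j = p"
    | "j \<notin> {p, i, q}" "nxt N j \<notin> {p, i, q}"
    using nxt_j by blast
  then have "pair_coeff N f T j + pair_coeff N f T' j = (if j = p \<or> j = i then f (T - {p, i}) else 0)"
  proof cases
    case 1
    then show ?thesis using T T' nxt_p pq unfolding pair_coeff_def by simp
  next
    case 2
    have "T' - {i, q} = T - {p, i}" using T pq unfolding T'_def by auto
    then show ?thesis using 2 T T' pq unfolding pair_coeff_def q_def by simp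
  next
    case 3
    have "nxt N q \<noteq> i" using nxt_eq_iff_eq_prv[OF pq(2) i] pq unfolding p_def by auto
    then have "pair_coeff N f T' q = 0" using T' pq by (intro isolated) auto
    moreover have "pair_coeff N f T q = 0" using T unfolding pair_coeff_def by simp
    ultimately show ?thesis using 3 pq by simp
  next
    case 4
    then have "pair_coeff N f T j = 0" using T pq by (intro isolated) auto
    moreover have "pair_coeff N f T' j = 0" using 4 T' unfolding pair_coeff_def by simp
    ultimately show ?thesis using 4 by simp
  next
    case 5
    then have "{j, nxt N j} \<inter> {prv N i, i, nxt N i} = {}" unfolding p_def q_def by auto
    then show ?thesis
      using pair_coeff_shift_disjoint[OF f assms(4-7)] 5 unfolding T'_def p_def q_def by simp
  qed
  then show ?thesis unfolding p_def q_def T'_def .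
qed

lemma Qcoeff_shift:
  assumes N: "N \<ge> 3" and "even N" and i: "i \<in> {1..N}" and f: "scar_invariant N i f"
    and T: "T \<subseteq> {1..N}" "prv N i \<in> T" "i \<in> T" "nxt N i \<notin> T"
  shows "Qcoeff N f (insert (nxt N i) (T - {prv N i})) = - Qcoeff N f T"
proof -
  define p where "p = prv N i"
  define F where "F = f (T - {p, i})"
  have p: "p \<in> {1..N}" "p \<noteq> i" using N i prv_in_sites prv_neq_self unfolding p_def by auto
  have "Qcoeff N f T + Qcoeff N f (insert (nxt N i) (T - {p})) =
      (\<Sum>j\<in>{1..N}. (-1) ^ j * (if j = p \<or> j = i then F else 0))"
    unfolding Qcoeff_def sum.distrib[symmetric] distrib_left[symmetric] p_def F_def
    using pair_coeff_shift[OF N i f T] by simp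
  also have "\<dots> = (\<Sum>j\<in>{p, i}. (-1) ^ j * F)"
    by (rule sum.mono_neutral_cong_right) (use p i in auto)
  also have "\<dots> = ((-1) ^ p + (-1) ^ i) * F"
    using p by (simp add: distrib_right)
  also have "\<dots> = 0"
    using neg_one_power_prv[where 'a=complex, OF \<open>even N\<close> i] unfolding p_def by simp
  finally show ?thesis unfolding p_def by (simp add: add_eq_0_iff)
qed

lemma scar_invariant_Qcoeff:
  assumes "N \<ge> 3" "even N" "i \<in> {1..N}" "scar_invariant N i f"
  shows "scar_invariant N i (Qcoeff N f)"
  unfolding scar_invariant_def
proof (intro conjI allI impI)
  fix S assume "S \<subseteq> {1..N}" "prv N i \<notin> S" "i \<in> S" "nxt N i \<notin> S"
  then show "Qcoeff N f S = 0" by (rule Qcoeff_isolated[OF assms(3,4)])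
next
  fix S assume "S \<subseteq> {1..N}" "prv N i \<in> S" "i \<in> S" "nxt N i \<notin> S"
  then show "Qcoeff N f (insert (nxt N i) (S - {prv N i})) = - Qcoeff N f S"
    by (rule Qcoeff_shift[OF assms])
qed

lemma vbs_bond_expansion: "vbs N = bond_expansion N (\<lambda>S. if S = {} then 1 else 0)"
proof
  fix c
  have "bond_expansion N (\<lambda>S. if S = {} then 1 else 0) c =
      (\<Sum>S\<in>Pow {1..N}. if S = {} then bond_state N S c else 0)"
    unfolding bond_expansion_def by (rule sum.cong) auto
  then show "vbs N c = bond_expansion N (\<lambda>S. if S = {} then 1 else 0) c"
    by (simp add: vbs_def bond_state_def)
qed

lemma scar_bond_expansion:
  assumes "N \<ge> 3" "even N" "i \<in> {1..N}"
  shows "\<exists>f. scar N n = bond_expansion N f \<and> scar_invariant N i f"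
proof (induction n)
  case 0
  show ?case using vbs_bond_expansion scar_invariant_empty by (auto simp: scar_def)
next
  case (Suc n)
  then obtain f where "scar N n = bond_expansion N f" "scar_invariant N i f" by blast
  then have "scar N (Suc n) = bond_expansion N (Qcoeff N f)"
    using Qfrac_bond_expansion[OF assms(1)] by (simp add: scar_def)
  then show ?case using scar_invariant_Qcoeff[OF assms \<open>scar_invariant N i f\<close>] by blast
qed

definition local_component ::
    "nat \<Rightarrow> nat \<Rightarrow> (nat set \<Rightarrow> complex) \<Rightarrow> bool \<Rightarrow> bool \<Rightarrow> bool \<Rightarrow> state" where
  "local_component N i f a b d c =
    (\<Sum>S\<in>{S\<in>Pow {1..N}. (prv N i \<in> S, i \<in> S, nxt N i \<in> S) = (a, b, d)}.
      f S * bond_state_except N {prv N i, i, nxt N i} S c)"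

lemma outside_bond_state_except:
  assumes i: "i \<in> {1..N}"
  shows "outside N i (bond_state_except N {prv N i, i, nxt N i} S)"
  unfolding outside_def
proof (intro allI impI)
  fix c c' :: cfg assume agree: "\<forall>s. s \<notin> six N i \<longrightarrow> c s = c' s"
  show "bond_state_except N {prv N i, i, nxt N i} S c =
      bond_state_except N {prv N i, i, nxt N i} S c'"
    unfolding bond_state_except_def
  proof (rule prod.cong[OF refl])
    fix k assume k: "k \<in> {1..N} - {prv N i, i, nxt N i}"
    have "nxt N k \<noteq> i" "nxt N k \<noteq> nxt N i" "nxt N k \<noteq> nxt N (nxt N i)"
      using nxt_eq_iff_eq_prv[of k N i] nxt_eq_nxt_iff[of k N i]
        nxt_eq_nxt_iff[of k N "nxt N i"] nxt_in_sites[OF i] k i by auto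
    then have "(k, True) \<notin> six N i" "(nxt N k, False) \<notin> six N i"
      using k unfolding six_def by auto
    then show "bondamp N (k \<in> S) k c = bondamp N (k \<in> S) k c'"
      using agree by (simp add: bondamp_def)
  qed
qed

lemma outside_local_component:
  assumes "i \<in> {1..N}"
  shows "outside N i (local_component N i f a b d)"
  unfolding outside_def
proof (intro allI impI)
  fix c c' :: cfg assume "\<forall>s. s \<notin> six N i \<longrightarrow> c s = c' s"
  then have "bond_state_except N {prv N i, i, nxt N i} S c =
      bond_state_except N {prv N i, i, nxt N i} S c'" for S
    using outside_bond_state_except[OF assms] unfolding outside_def by blast
  then show "local_component N i f a b d c = local_component N i f a b d c'"
    unfolding local_component_def by simp
qed

lemma bond_expansion_local_decomposition:
  assumes N: "N \<ge> 3" and i: "i \<in> {1..N}"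
  shows "bond_expansion N f c =
    (\<Sum>a\<in>UNIV. \<Sum>b\<in>UNIV. \<Sum>d\<in>UNIV. tb N i a b d c * local_component N i f a b d c)"
proof -
  define B where "B = {prv N i, i, nxt N i}"
  define key where "key = (\<lambda>S. (prv N i \<in> S, i \<in> S, nxt N i \<in> S))"
  define G where "G = (\<lambda>S. tb N i (prv N i \<in> S) (i \<in> S) (nxt N i \<in> S) c *
      (f S * bond_state_except N B S c))"
  have B: "B \<subseteq> {1..N}" "prv N i \<noteq> i" "nxt N i \<noteq> i" "prv N i \<noteq> nxt N i"
    using N i prv_in_sites nxt_in_sites prv_neq_self nxt_neq_self prv_neq_nxt unfolding B_def by auto
  have "bond_state N S c = tb N i (prv N i \<in> S) (i \<in> S) (nxt N i \<in> S) c * bond_state_except N B S c"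
    for S using bond_state_split[OF B(1)] B(2-4) by (simp add: B_def tb_def mult.assoc)
  then have "bond_expansion N f c = (\<Sum>S\<in>Pow {1..N}. G S)"
    unfolding bond_expansion_def G_def by (simp add: mult_ac)
  also have "\<dots> = (\<Sum>t\<in>UNIV. \<Sum>S\<in>{S. S \<in> Pow {1..N} \<and> key S = t}. G S)"
    by (rule sum.group[symmetric]) auto
  also have "\<dots> = (\<Sum>(a, b, d)\<in>UNIV. tb N i a b d c * local_component N i f a b d c)"
    unfolding local_component_def sum_distrib_left G_def key_def B_def
    by (rule sum.cong) (auto intro: sum.cong)
  finally show ?thesis by (simp add: sum.cartesian_product UNIV_Times_UNIV)
qed

lemma local_component_isolated:
  assumes "scar_invariant N i f"
  shows "local_component N i f False True False = (\<lambda>c. 0)"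
  unfolding local_component_def
  by (intro ext sum.neutral) (auto simp: scar_invariant_isolated[OF assms])

lemma local_component_shift:
  assumes N: "N \<ge> 3" and i: "i \<in> {1..N}" and f: "scar_invariant N i f"
  shows "local_component N i f False True True = (\<lambda>c. - local_component N i f True True False c)"
proof
  fix c
  define p where "p = prv N i"
  define q where "q = nxt N i"
  define B where "B = {p, i, q}"
  define A where "A = {S\<in>Pow {1..N}. (p \<in> S, i \<in> S, q \<in> S) = (True, True, False)}"
  have pq: "p \<noteq> i" "q \<noteq> i" "p \<noteq> q"
    using N i prv_neq_self nxt_neq_self prv_neq_nxt unfolding p_def q_def by auto
  have shift: "f (insert q (S - {p})) * bond_state_except N B (insert q (S - {p})) c =
      - (f S * bond_state_except N B S c)" if "S \<in> A" for S
  proof -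
    have "f (insert q (S - {p})) = - f S"
      using scar_invariant_shift[OF f] that unfolding A_def p_def q_def by simp
    moreover have "bond_state_except N B (insert q (S - {p})) = bond_state_except N B S"
      by (rule bond_state_except_cong) (auto simp: B_def)
    ultimately show ?thesis by simp
  qed
  have "local_component N i f False True True c =
      (\<Sum>S\<in>A. f (insert q (S - {p})) * bond_state_except N B (insert q (S - {p})) c)"
    unfolding local_component_def p_def[symmetric] q_def[symmetric] B_def[symmetric] A_def
    by (rule sum.reindex_bij_witness[where j="\<lambda>S. insert p (S - {q})" and i="\<lambda>S. insert q (S - {p})"])
      (use pq i prv_in_sites nxt_in_sites in \<open>auto simp: insert_absorb p_def q_def\<close>)
  also have "\<dots> = - local_component N i f True True False c"
    unfolding local_component_def p_def[symmetric] q_def[symmetric] B_def[symmetric] A_def[symmetric]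
    by (simp add: shift sum_negf)
  finally show "local_component N i f False True True c = - local_component N i f True True False c" .
qed

theorem lemma1:
  fixes N n i :: nat
  assumes "N \<ge> 4" and "even N" and "i \<in> {1..N}"
  shows "\<exists>X0 X1 X2.
           (\<forall>\<sigma> \<sigma>'. outside N i (X0 \<sigma> \<sigma>')) \<and> outside N i X1 \<and> outside N i X2 \<and>
           (\<forall>c\<in>Cfg N.
              scar N n c =
                (\<Sum>\<sigma>\<in>UNIV. \<Sum>\<sigma>'\<in>UNIV. tb N i \<sigma> False \<sigma>' c * X0 \<sigma> \<sigma>' c)
                + (tb N i True True False c - tb N i False True True c) * X1 c
                + tb N i True True True c * X2 c)"
proof -
  have N: "N \<ge> 3" using assms(1) by simp
  obtain f where scar: "scar N n = bond_expansion N f" and f: "scar_invariant N i f"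
    using scar_bond_expansion[OF N assms(2,3)] by blast
  let ?X = "local_component N i f"
  have "scar N n c =
      (\<Sum>\<sigma>\<in>UNIV. \<Sum>\<sigma>'\<in>UNIV. tb N i \<sigma> False \<sigma>' c * ?X \<sigma> False \<sigma>' c)
      + (tb N i True True False c - tb N i False True True c) * ?X True True False c
      + tb N i True True True c * ?X True True True c" for c
    using bond_expansion_local_decomposition[OF N assms(3), of f c]
      local_component_isolated[OF f] local_component_shift[OF N assms(3) f]
    by (simp add: scar UNIV_bool algebra_simps)
  then show ?thesis
    using outside_local_component[OF assms(3)]
    by (intro exI[of _ "\<lambda>\<sigma> \<sigma>'. ?X \<sigma> False \<sigma>'"] exI[of _ "?X True True False"]
        exI[of _ "?X True True True"]) simp
qed

end
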